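(* For every word $w$ of positive integers and every $k\ge1$, $P(w)|_{[k]}=P(w|_{[k]})$.
   Context: $[k]=\{1,\dots,k\}$. For a tableau $T$ and set $I$, $T|_I$ is obtained by deleting all boxes whose labels are not in $I$; $w|_I$ is obtained from the word $w$ by deleting all letters not in $I$. Shifted shapes: for a strict partition $\lambda$, boxes $(i,j)$ with $i\le j\le i+\lambda_i-1$; boxes $(i,i)$ form the main diagonal. Increasing shifted tableau: entries strictly increase along rows and down columns. Shifted Hecke insertion of $x$ into an increasing shifted tableau $T$: first insert $x$ into row 1. When $x$ is inserted into a row (resp. column): (i) if $x$ is weakly larger than all entries and adjoining a box containing $x$ at the end of that row (resp. column) gives an increasing shifted tableau, do so and stop (adjoining to an empty row $i$ means adding box $(i,i)$); (ii) if $x$ is weakly larger than all entries but adjoining fails to give an increasing shifted tableau, leave the tableau unchanged and stop; (iii) otherwise let $y$ be the smallest entry strictly larger than $x$ there; replace $y$ by $x$ if the result is increasing, otherwise change nothing; in either case $y$ is output: if $x$ was inserted into a column or $y$ lies on the main diagonal, $y$ is inserted into the next column to the right (all subsequent outputs go into successive columns), otherwise into the next row below. $P(w)=(\cdots(\emptyset\leftarrow w_1)\cdots)\leftarrow w_n$. *)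

theory Defs
  imports Main
begin

text \<open>Tableaux are partial maps from boxes (i,j) (row i, column j, both starting at 1)
  to positive-integer labels.\<close>

type_synonym tableau = "nat \<times> nat \<Rightarrow> nat option"

definition strict_partition :: "nat list \<Rightarrow> bool" where
  "strict_partition lam \<longleftrightarrow> sorted_wrt (>) lam \<and> (\<forall>x\<in>set lam. 0 < x)"

definition shifted_shape :: "nat list \<Rightarrow> (nat \<times> nat) set" where
  "shifted_shape lam = {(i,j). 1 \<le> i \<and> i \<le> length lam \<and> i \<le> j \<and> j \<le> i + lam ! (i - 1) - 1}"

definition increasing :: "tableau \<Rightarrow> bool" where
  "increasing T \<longleftrightarrow>
     (\<forall>i j j' a b. T (i,j) = Some a \<longrightarrow> T (i,j') = Some b \<longrightarrow> j < j' \<longrightarrow> a < b) \<and>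
     (\<forall>i i' j a b. T (i,j) = Some a \<longrightarrow> T (i',j) = Some b \<longrightarrow> i < i' \<longrightarrow> a < b)"

definition inc_shifted_tableau :: "tableau \<Rightarrow> bool" where
  "inc_shifted_tableau T \<longleftrightarrow>
     (\<exists>lam. strict_partition lam \<and> dom T = shifted_shape lam) \<and> increasing T"

definition restrict_tab :: "tableau \<Rightarrow> nat set \<Rightarrow> tableau" where
  "restrict_tab T I = (\<lambda>p. case T p of None \<Rightarrow> None | Some v \<Rightarrow> if v \<in> I then Some v else None)"

definition restrict_word :: "nat list \<Rightarrow> nat set \<Rightarrow> nat list" where
  "restrict_word w I = filter (\<lambda>a. a \<in> I) w"

datatype ins_mode = InRow nat | InCol nat

definition row_boxes :: "tableau \<Rightarrow> nat \<Rightarrow> (nat \<times> nat) set" where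
  "row_boxes T i = {p \<in> dom T. fst p = i}"

definition col_boxes :: "tableau \<Rightarrow> nat \<Rightarrow> (nat \<times> nat) set" where
  "col_boxes T j = {p \<in> dom T. snd p = j}"

definition row_end :: "tableau \<Rightarrow> nat \<Rightarrow> nat \<times> nat" where
  "row_end T i = (if row_boxes T i = {} then (i,i) else (i, Max (snd ` row_boxes T i) + 1))"

definition col_end :: "tableau \<Rightarrow> nat \<Rightarrow> nat \<times> nat" where
  "col_end T j = (if col_boxes T j = {} then (1,j) else (Max (fst ` col_boxes T j) + 1, j))"

definition mode_boxes :: "tableau \<Rightarrow> ins_mode \<Rightarrow> (nat \<times> nat) set" where
  "mode_boxes T m = (case m of InRow i \<Rightarrow> row_boxes T i | InCol j \<Rightarrow> col_boxes T j)"

definition mode_end :: "tableau \<Rightarrow> ins_mode \<Rightarrow> nat \<times> nat" where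
  "mode_end T m = (case m of InRow i \<Rightarrow> row_end T i | InCol j \<Rightarrow> col_end T j)"

text \<open>Shifted Hecke insertion of x into row/column m of T, with a fuel argument that
  bounds the number of bumping steps (the fuel supplied by hecke_insert below is
  always sufficient, since every step moves to a strictly later row or column).\<close>
fun hecke_ins :: "nat \<Rightarrow> ins_mode \<Rightarrow> nat \<Rightarrow> tableau \<Rightarrow> tableau" where
  "hecke_ins 0 m x T = T"
| "hecke_ins (Suc n) m x T =
     (let B = mode_boxes T m; vals = (\<lambda>p. the (T p)) ` B in
      if \<forall>v\<in>vals. v \<le> x then
        (let T' = T(mode_end T m \<mapsto> x) in if inc_shifted_tableau T' then T' else T)
      else
        (let y = Min {v \<in> vals. x < v};
             p = (THE p. p \<in> B \<and> T p = Some y);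
             T' = T(p \<mapsto> x);
             T'' = (if inc_shifted_tableau T' then T' else T);
             m' = (case m of InCol j \<Rightarrow> InCol (j + 1)
                           | InRow i \<Rightarrow> if fst p = snd p then InCol (snd p + 1) else InRow (i + 1))
         in hecke_ins n m' y T''))"

definition hecke_insert :: "tableau \<Rightarrow> nat \<Rightarrow> tableau" where
  "hecke_insert T x = hecke_ins (2 * card (dom T) + 3) (InRow 1) x T"

definition P_tab :: "nat list \<Rightarrow> tableau" where
  "P_tab w = foldl hecke_insert Map.empty w"

end

theory Submission
  imports Defs
begin

text \<open>Restricting to the labels \<open>\<le> k\<close> commutes with every single shifted Hecke insertion.
  A letter \<open>x > k\<close> never moves a label \<open>\<le> k\<close>, since a bumped label is always larger than
  the one that bumps it. For \<open>x \<le> k\<close> both insertions bump the same boxes as long as the bumped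
  label is \<open>\<le> k\<close>; once it exceeds \<open>k\<close>, that box is exactly the end of the current row
  (column) of the restricted tableau, so the restricted insertion adjoins \<open>x\<close> there and stops,
  while the unrestricted one continues with labels \<open>> k\<close> only. The test whether a placement
  yields an increasing shifted tableau has the same outcome before and after restriction,
  because the neighbours to the left of and above a new entry are smaller than it.\<close>

definition shifted_closed :: "(nat \<times> nat) set \<Rightarrow> bool" where
  "shifted_closed D \<longleftrightarrow> finite D \<and> (\<forall>i j. (i,j) \<in> D \<longrightarrow> 1 \<le> i \<and> i \<le> j)
     \<and> (\<forall>i j. (i,j) \<in> D \<longrightarrow> i < j \<longrightarrow> (i,j-1) \<in> D)
     \<and> (\<forall>i j. (i,j) \<in> D \<longrightarrow> 1 < i \<longrightarrow> (i-1,j) \<in> D)"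

lemma shifted_closed_left:
  assumes D: "shifted_closed D" and ij': "(i,j') \<in> D" and "i \<le> j" "j \<le> j'"
  shows "(i,j) \<in> D"
  using \<open>j \<le> j'\<close> \<open>i \<le> j\<close>
proof (induction j rule: inc_induct)
  case base show ?case by (fact ij')
next
  case (step n)
  then have "(i, Suc n - 1) \<in> D" using D unfolding shifted_closed_def by (metis le_SucI less_Suc_eq_le)
  then show ?case by simp
qed

lemma shifted_closed_up:
  assumes D: "shifted_closed D" and i'j: "(i',j) \<in> D" and "1 \<le> i" "i \<le> i'"
  shows "(i,j) \<in> D"
  using \<open>i \<le> i'\<close> \<open>1 \<le> i\<close>
proof (induction i rule: inc_induct)
  case base show ?case by (fact i'j)
next
  case (step n)
  then have "(Suc n - 1, j) \<in> D" using D unfolding shifted_closed_def by (metis le_SucI less_Suc_eq_le)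
  then show ?case by simp
qed

lemma shifted_closed_shifted_shape:
  assumes "strict_partition lam"
  shows "shifted_closed (shifted_shape lam)"
proof -
  have sw: "sorted_wrt (>) lam" using assms unfolding strict_partition_def by auto
  have "shifted_shape lam \<subseteq> {0..length lam} \<times> {0..length lam + sum_list lam}"
  proof
    fix p assume "p \<in> shifted_shape lam"
    then obtain i j where p: "p = (i,j)" "1 \<le> i" "i \<le> length lam" "j \<le> i + lam ! (i - 1) - 1"
      unfolding shifted_shape_def by auto
    have "lam ! (i-1) \<le> sum_list lam" using p(2,3) by (intro elem_le_sum_list) auto
    then show "p \<in> {0..length lam} \<times> {0..length lam + sum_list lam}" using p by auto
  qed
  then have "finite (shifted_shape lam)" by (rule finite_subset) auto
  moreover have "(i-1,j) \<in> shifted_shape lam" if "(i,j) \<in> shifted_shape lam" "1 < i" for i j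
  proof -
    have h: "i \<le> length lam" "i \<le> j" "j \<le> i + lam ! (i - 1) - 1"
      using that unfolding shifted_shape_def by auto
    have "lam ! (i-1) < lam ! (i-2)" using sw h that by (auto simp: sorted_wrt_iff_nth_less)
    then show ?thesis using h that unfolding shifted_shape_def by (auto simp: numeral_2_eq_2)
  qed
  moreover have "(i,j-1) \<in> shifted_shape lam" if "(i,j) \<in> shifted_shape lam" "i < j" for i j
    using that unfolding shifted_shape_def by (simp; linarith)
  ultimately show ?thesis unfolding shifted_closed_def shifted_shape_def by blast
qed

lemma shifted_closed_rows:
  assumes D: "shifted_closed D"
  obtains N M where "\<And>i j. (i,j) \<in> D \<longleftrightarrow> 1 \<le> i \<and> i \<le> N \<and> i \<le> j \<and> j \<le> M i"
    and "\<And>a b. 1 \<le> a \<Longrightarrow> a \<le> b \<Longrightarrow> b \<le> N \<Longrightarrow> M b \<le> M a"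
    and "\<And>i. 1 \<le> i \<Longrightarrow> i \<le> N \<Longrightarrow> i \<le> M i"
proof -
  have fin: "finite D" using D unfolding shifted_closed_def by auto
  define N where "N = Max (insert 0 (fst ` D))"
  define M where "M = (\<lambda>i. Max {j. (i,j) \<in> D})"
  have rowfin: "finite {j. (i,j) \<in> D}" for i
    using finite_imageI[OF fin, of snd] by (rule finite_subset[rotated]) force
  have Mmem: "(i, M i) \<in> D" if "1 \<le> i" "i \<le> N" for i
  proof -
    have "N \<in> fst ` D" using that Max_in[of "insert 0 (fst ` D)"] fin unfolding N_def by auto
    then obtain c where "(N,c) \<in> D" by force
    then have "(i,c) \<in> D" using shifted_closed_up[OF D] that by blast
    then show ?thesis unfolding M_def using Max_in[OF rowfin] by fastforce
  qed
  have memD: "(i,j) \<in> D \<longleftrightarrow> 1 \<le> i \<and> i \<le> N \<and> i \<le> j \<and> j \<le> M i" for i j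
  proof
    assume h: "(i,j) \<in> D"
    then have "i \<le> N" using fin unfolding N_def by (auto intro!: Max_ge simp: image_iff) (metis fst_conv)
    moreover have "j \<le> M i" using h rowfin unfolding M_def by auto
    ultimately show "1 \<le> i \<and> i \<le> N \<and> i \<le> j \<and> j \<le> M i"
      using h D unfolding shifted_closed_def by auto
  next
    assume "1 \<le> i \<and> i \<le> N \<and> i \<le> j \<and> j \<le> M i"
    then show "(i,j) \<in> D" using shifted_closed_left[OF D Mmem] by auto
  qed
  moreover have "M b \<le> M a" if "1 \<le> a" "a \<le> b" "b \<le> N" for a b
    using shifted_closed_up[OF D Mmem[of b]] that memD by auto
  moreover have "i \<le> M i" if "1 \<le> i" "i \<le> N" for i
    using Mmem[OF that] memD by auto
  ultimately show ?thesis by (rule that)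
qed

lemma shifted_shape_of_rows:
  assumes D: "\<And>i j. (i,j) \<in> D \<longleftrightarrow> 1 \<le> i \<and> i \<le> N \<and> i \<le> j \<and> j \<le> M i"
    and M: "\<And>a b. 1 \<le> a \<Longrightarrow> a \<le> b \<Longrightarrow> b \<le> N \<Longrightarrow> M b \<le> M a"
    and Mge: "\<And>i. 1 \<le> i \<Longrightarrow> i \<le> N \<Longrightarrow> i \<le> M i"
  defines "lam \<equiv> map (\<lambda>i. M i + 1 - i) [1..<N+1]"
  shows "strict_partition lam" and "D = shifted_shape lam"
proof -
  have nth: "lam ! (i-1) = M i + 1 - i" if "1 \<le> i" "i \<le> N" for i
  proof -
    have "[1..<N+1] ! (i-1) = i" using that by (simp del: upt_Suc)
    then show ?thesis using that unfolding lam_def by (simp del: upt_Suc)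
  qed
  have len: "length lam = N" unfolding lam_def by simp
  have "sorted_wrt (>) lam"
    unfolding sorted_wrt_iff_nth_less len
  proof (intro allI impI)
    fix a b assume ab: "a < b" "b < N"
    then show "lam ! b < lam ! a"
      using nth[of "Suc a"] nth[of "Suc b"] M[of "Suc a" "Suc b"] Mge[of "Suc b"] by auto
  qed
  moreover have "\<forall>x\<in>set lam. 0 < x"
    using Mge unfolding lam_def by (fastforce simp del: upt_Suc simp: less_Suc_eq_le)
  ultimately show "strict_partition lam" unfolding strict_partition_def by blast
  show "D = shifted_shape lam"
  proof (rule set_eqI)
    fix p :: "nat \<times> nat"
    obtain i j where "p = (i,j)" by force
    then show "p \<in> D \<longleftrightarrow> p \<in> shifted_shape lam"
      unfolding shifted_shape_def len using D nth Mge by auto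
  qed
qed

lemma shifted_closed_iff:
  "shifted_closed D \<longleftrightarrow> (\<exists>lam. strict_partition lam \<and> D = shifted_shape lam)"
proof
  assume "shifted_closed D"
  then show "\<exists>lam. strict_partition lam \<and> D = shifted_shape lam"
  proof (rule shifted_closed_rows)
    fix N M
    assume "\<And>i j. (i,j) \<in> D \<longleftrightarrow> 1 \<le> i \<and> i \<le> N \<and> i \<le> j \<and> j \<le> M i"
      "\<And>a b. 1 \<le> a \<Longrightarrow> a \<le> b \<Longrightarrow> b \<le> N \<Longrightarrow> M b \<le> M a"
      "\<And>i. 1 \<le> i \<Longrightarrow> i \<le> N \<Longrightarrow> i \<le> M i"
    from shifted_shape_of_rows[OF this] show ?thesis by blast
  qed
qed (use shifted_closed_shifted_shape in blast)

definition shifted_tableau :: "tableau \<Rightarrow> bool" where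
  "shifted_tableau T \<longleftrightarrow> shifted_closed (dom T) \<and> increasing T"

lemma inc_shifted_tableau_iff: "inc_shifted_tableau T \<longleftrightarrow> shifted_tableau T"
  unfolding inc_shifted_tableau_def shifted_tableau_def shifted_closed_iff by blast

lemma shifted_tableau_empty: "shifted_tableau Map.empty"
  unfolding shifted_tableau_def shifted_closed_def increasing_def by simp

lemma shifted_tableau_finite: "shifted_tableau T \<Longrightarrow> finite (dom T)"
  unfolding shifted_tableau_def shifted_closed_def by auto

lemma shifted_tableau_box: "shifted_tableau T \<Longrightarrow> (i,j) \<in> dom T \<Longrightarrow> 1 \<le> i \<and> i \<le> j"
  unfolding shifted_tableau_def shifted_closed_def by auto

lemma shifted_tableau_left: "shifted_tableau T \<Longrightarrow> (i,j) \<in> dom T \<Longrightarrow> i < j \<Longrightarrow> (i,j-1) \<in> dom T"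
  unfolding shifted_tableau_def shifted_closed_def by auto

lemma shifted_tableau_up: "shifted_tableau T \<Longrightarrow> (i,j) \<in> dom T \<Longrightarrow> 1 < i \<Longrightarrow> (i-1,j) \<in> dom T"
  unfolding shifted_tableau_def shifted_closed_def by auto

lemma increasing_rowD:
  "increasing T \<Longrightarrow> T (i,j) = Some u \<Longrightarrow> T (i,j') = Some v \<Longrightarrow> j < j' \<Longrightarrow> u < v"
  unfolding increasing_def by blast

lemma increasing_colD:
  "increasing T \<Longrightarrow> T (i,j) = Some u \<Longrightarrow> T (i',j) = Some v \<Longrightarrow> i < i' \<Longrightarrow> u < v"
  unfolding increasing_def by blast

lemma increasing_row_leD:
  "increasing T \<Longrightarrow> T (i,j) = Some u \<Longrightarrow> T (i,j') = Some v \<Longrightarrow> j \<le> j' \<Longrightarrow> u \<le> v"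
  by (cases "j = j'") (auto dest: increasing_rowD)

lemma increasing_col_leD:
  "increasing T \<Longrightarrow> T (i,j) = Some u \<Longrightarrow> T (i',j) = Some v \<Longrightarrow> i \<le> i' \<Longrightarrow> u \<le> v"
  by (cases "i = i'") (auto dest: increasing_colD)

lemma shifted_closed_insert:
  assumes "shifted_closed D" and "1 \<le> a" "a \<le> b"
    and "a < b \<Longrightarrow> (a,b-1) \<in> D" and "1 < a \<Longrightarrow> (a-1,b) \<in> D"
  shows "shifted_closed (insert (a,b) D)"
  using assms unfolding shifted_closed_def by (auto 4 3)

text \<open>Entries to the right of or below \<open>(a,b)\<close> exceed the entry that \<open>x\<close> replaces; if there is
  none, there are no such entries since \<open>dom T\<close> is shifted-closed.\<close>
lemma increasing_upd:
  assumes T: "shifted_tableau T" and ab: "1 \<le> a" "a \<le> b" and e: "\<forall>y. T (a,b) = Some y \<longrightarrow> x < y"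
    and left: "a < b \<Longrightarrow> \<exists>w. T (a,b-1) = Some w \<and> w < x"
    and up: "1 < a \<Longrightarrow> \<exists>w. T (a-1,b) = Some w \<and> w < x"
  shows "increasing (T((a,b) \<mapsto> x))"
proof -
  have inc: "increasing T" and D: "shifted_closed (dom T)" using T unfolding shifted_tableau_def by auto
  have right: "x < v" if "T (a,j') = Some v" "b < j'" for j' v
  proof (cases "T (a,b)")
    case None
    then show ?thesis using shifted_closed_left[OF D, of a j' b] ab that by auto
  qed (use e increasing_rowD[OF inc _ that] in fastforce)
  have below: "x < v" if "T (i',b) = Some v" "a < i'" for i' v
  proof (cases "T (a,b)")
    case None
    then show ?thesis using shifted_closed_up[OF D, of i' b a] ab that by auto
  qed (use e increasing_colD[OF inc _ that] in fastforce)
  have before: "u < x" if u: "T (a,j) = Some u" "j < b" for j u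
  proof -
    obtain w where w: "T (a,b-1) = Some w" "w < x"
      using left shifted_tableau_box[OF T, of a j] u by fastforce
    have "j \<le> b - 1" using u(2) by linarith
    then show ?thesis using increasing_row_leD[OF inc u(1) w(1)] w(2) by simp
  qed
  have above: "u < x" if u: "T (i,b) = Some u" "i < a" for i u
  proof -
    obtain w where w: "T (a-1,b) = Some w" "w < x"
      using up shifted_tableau_box[OF T, of i b] u by fastforce
    have "i \<le> a - 1" using u(2) by linarith
    then show ?thesis using increasing_col_leD[OF inc u(1) w(1)] w(2) by simp
  qed
  show ?thesis
    unfolding increasing_def using inc[unfolded increasing_def] right below before above
    by (auto split: if_splits)
qed

lemma shifted_tableau_upd:
  assumes T: "shifted_tableau T" and ab: "1 \<le> a" "a \<le> b" and e: "\<forall>y. T (a,b) = Some y \<longrightarrow> x < y"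
    and left: "a < b \<Longrightarrow> \<exists>w. T (a,b-1) = Some w \<and> w < x"
    and up: "1 < a \<Longrightarrow> \<exists>w. T (a-1,b) = Some w \<and> w < x"
  shows "shifted_tableau (T((a,b) \<mapsto> x))"
proof -
  have "shifted_closed (insert (a,b) (dom T))"
    using shifted_closed_insert[of "dom T" a b] T ab left up unfolding shifted_tableau_def by blast
  then show ?thesis using increasing_upd[OF assms] unfolding shifted_tableau_def by simp
qed

abbreviation restrict_upto :: "nat \<Rightarrow> tableau \<Rightarrow> tableau" where
  "restrict_upto k T \<equiv> restrict_tab T {..k}"

lemma restrict_upto_Some: "restrict_upto k T q = Some v \<longleftrightarrow> T q = Some v \<and> v \<le> k"
  unfolding restrict_tab_def by (cases "T q") auto

lemma restrict_upto_None: "restrict_upto k T q = None \<longleftrightarrow> (\<forall>v. T q = Some v \<longrightarrow> k < v)"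
  unfolding restrict_tab_def by (cases "T q") auto

lemma dom_restrict_upto: "dom (restrict_upto k T) = {q. \<exists>v. T q = Some v \<and> v \<le> k}"
  using restrict_upto_Some by (auto simp: dom_def)

lemma restrict_upto_upd_le: "x \<le> k \<Longrightarrow> restrict_upto k (T(e \<mapsto> x)) = (restrict_upto k T)(e \<mapsto> x)"
  unfolding restrict_tab_def by (rule ext) auto

lemma restrict_upto_upd_gt: "k < x \<Longrightarrow> restrict_upto k (T(e \<mapsto> x)) = (restrict_upto k T)(e := None)"
  unfolding restrict_tab_def by (rule ext) auto

lemma shifted_tableau_restrict_upto:
  assumes T: "shifted_tableau T"
  shows "shifted_tableau (restrict_upto k T)"
proof -
  have inc: "increasing T" using T unfolding shifted_tableau_def by auto
  have "finite (dom (restrict_upto k T))"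
    using shifted_tableau_finite[OF T] by (rule finite_subset[rotated]) (auto simp: dom_restrict_upto)
  moreover have "(i,j-1) \<in> dom (restrict_upto k T)"
    if h: "(i,j) \<in> dom (restrict_upto k T)" "i < j" for i j
  proof -
    obtain v where v: "T (i,j) = Some v" "v \<le> k" using h(1) by (auto simp: dom_restrict_upto)
    obtain u where u: "T (i,j-1) = Some u" using shifted_tableau_left[OF T, of i j] v h(2) by auto
    have "u < v" using increasing_rowD[OF inc u v(1)] h(2) by simp
    then show ?thesis using u v by (auto simp: dom_restrict_upto)
  qed
  moreover have "(i-1,j) \<in> dom (restrict_upto k T)"
    if h: "(i,j) \<in> dom (restrict_upto k T)" "1 < i" for i j
  proof -
    obtain v where v: "T (i,j) = Some v" "v \<le> k" using h(1) by (auto simp: dom_restrict_upto)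
    obtain u where u: "T (i-1,j) = Some u" using shifted_tableau_up[OF T, of i j] v h(2) by auto
    have "u < v" using increasing_colD[OF inc u v(1)] h(2) by simp
    then show ?thesis using u v by (auto simp: dom_restrict_upto)
  qed
  moreover have "increasing (restrict_upto k T)"
    using inc unfolding increasing_def restrict_upto_Some by blast
  moreover have "1 \<le> i \<and> i \<le> j" if "(i,j) \<in> dom (restrict_upto k T)" for i j
    using that shifted_tableau_box[OF T, of i j] by (auto simp: dom_restrict_upto)
  ultimately show ?thesis unfolding shifted_tableau_def shifted_closed_def by blast
qed

lemma shifted_tableau_upd_of_restrict:
  assumes T: "shifted_tableau T" and xk: "x \<le> k" and e: "\<forall>y. T e = Some y \<longrightarrow> x < y"
    and restr: "shifted_tableau (restrict_upto k (T(e \<mapsto> x)))"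
  shows "shifted_tableau (T(e \<mapsto> x))"
proof -
  obtain a b where ab_def: "e = (a,b)" by force
  define R where "R = restrict_upto k (T(e \<mapsto> x))"
  have Re: "R (a,b) = Some x" and Ro: "\<And>q. q \<noteq> (a,b) \<Longrightarrow> R q = restrict_upto k T q"
    unfolding R_def restrict_upto_upd_le[OF xk] ab_def by auto
  have gR: "shifted_tableau R" and incR: "increasing R" using restr unfolding R_def shifted_tableau_def by auto
  have ab: "1 \<le> a" "a \<le> b" using shifted_tableau_box[OF gR, of a b] Re by auto
  have "\<exists>w. T (a,b-1) = Some w \<and> w < x" if "a < b"
  proof -
    obtain w where w: "R (a,b-1) = Some w" using shifted_tableau_left[OF gR, of a b] Re \<open>a < b\<close> by auto
    then have "restrict_upto k T (a,b-1) = Some w" using Ro[of "(a,b-1)"] \<open>a < b\<close> by simp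
    then have "T (a,b-1) = Some w" unfolding restrict_upto_Some by simp
    then show ?thesis using increasing_rowD[OF incR w Re] \<open>a < b\<close> by simp
  qed
  moreover have "\<exists>w. T (a-1,b) = Some w \<and> w < x" if "1 < a"
  proof -
    obtain w where w: "R (a-1,b) = Some w" using shifted_tableau_up[OF gR, of a b] Re \<open>1 < a\<close> by auto
    then have "restrict_upto k T (a-1,b) = Some w" using Ro[of "(a-1,b)"] \<open>1 < a\<close> by simp
    then have "T (a-1,b) = Some w" unfolding restrict_upto_Some by simp
    then show ?thesis using increasing_colD[OF incR w Re] \<open>1 < a\<close> by simp
  qed
  ultimately show ?thesis using shifted_tableau_upd[OF T ab] e unfolding ab_def by blast
qed

definition mode_vals :: "tableau \<Rightarrow> ins_mode \<Rightarrow> nat set" where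
  "mode_vals T m = (\<lambda>p. the (T p)) ` mode_boxes T m"

definition bumped :: "tableau \<Rightarrow> ins_mode \<Rightarrow> nat \<Rightarrow> nat" where
  "bumped T m x = Min {v \<in> mode_vals T m. x < v}"

definition bump_box :: "tableau \<Rightarrow> ins_mode \<Rightarrow> nat \<Rightarrow> nat \<times> nat" where
  "bump_box T m x = (THE p. p \<in> mode_boxes T m \<and> T p = Some (bumped T m x))"

definition try_put :: "tableau \<Rightarrow> nat \<times> nat \<Rightarrow> nat \<Rightarrow> tableau" where
  "try_put T p x = (if inc_shifted_tableau (T(p \<mapsto> x)) then T(p \<mapsto> x) else T)"

definition next_mode :: "ins_mode \<Rightarrow> nat \<times> nat \<Rightarrow> ins_mode" where
  "next_mode m p = (case m of InCol j \<Rightarrow> InCol (j + 1)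
     | InRow i \<Rightarrow> if fst p = snd p then InCol (snd p + 1) else InRow (i + 1))"

lemma hecke_ins_Suc_put:
  "\<forall>v\<in>mode_vals T m. v \<le> x \<Longrightarrow> hecke_ins (Suc n) m x T = try_put T (mode_end T m) x"
  by (simp add: mode_vals_def try_put_def Let_def)

lemma hecke_ins_Suc_bump:
  assumes "\<not> (\<forall>v\<in>mode_vals T m. v \<le> x)"
  shows "hecke_ins (Suc n) m x T
     = hecke_ins n (next_mode m (bump_box T m x)) (bumped T m x) (try_put T (bump_box T m x) x)"
  using assms unfolding mode_vals_def
  by (simp only: hecke_ins.simps Let_def if_False bumped_def bump_box_def mode_vals_def
      try_put_def next_mode_def)

declare hecke_ins.simps(2)[simp del]

lemma shifted_tableau_try_put: "shifted_tableau T \<Longrightarrow> shifted_tableau (try_put T p x)"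
  by (simp add: try_put_def inc_shifted_tableau_iff)

lemma dom_try_put: "p \<in> dom T \<Longrightarrow> dom (try_put T p x) = dom T"
  by (auto simp: try_put_def)

lemma ran_try_put: "ran (try_put T p x) \<subseteq> insert x (ran T)"
  by (auto simp: try_put_def ran_def)

lemma mode_boxes_iff:
  "q \<in> mode_boxes T m \<longleftrightarrow> q \<in> dom T \<and> (case m of InRow i \<Rightarrow> fst q = i | InCol j \<Rightarrow> snd q = j)"
  by (cases m) (auto simp: mode_boxes_def row_boxes_def col_boxes_def)

lemma mode_vals_iff: "v \<in> mode_vals T m \<longleftrightarrow> (\<exists>q\<in>mode_boxes T m. T q = Some v)"
  by (force simp: mode_vals_def mode_boxes_iff)

lemma finite_mode_vals: "finite (dom T) \<Longrightarrow> finite (mode_vals T m)"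
  unfolding mode_vals_def by (rule finite_imageI) (auto simp: mode_boxes_iff intro: finite_subset)

lemma bumped:
  assumes "finite (dom T)" and "\<not> (\<forall>v\<in>mode_vals T m. v \<le> x)"
  shows "bumped T m x \<in> mode_vals T m" and "x < bumped T m x"
    and "\<And>v. v \<in> mode_vals T m \<Longrightarrow> x < v \<Longrightarrow> bumped T m x \<le> v"
proof -
  have fin: "finite {v \<in> mode_vals T m. x < v}" using finite_mode_vals[OF assms(1)] by simp
  have "{v \<in> mode_vals T m. x < v} \<noteq> {}" using assms(2) by auto
  from Min_in[OF fin this] show "bumped T m x \<in> mode_vals T m" "x < bumped T m x"
    unfolding bumped_def by auto
  show "\<And>v. v \<in> mode_vals T m \<Longrightarrow> x < v \<Longrightarrow> bumped T m x \<le> v"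
    unfolding bumped_def using fin by simp
qed

lemma bump_box_eq:
  assumes inc: "increasing T" and q: "q \<in> mode_boxes T m" "T q = Some (bumped T m x)"
  shows "bump_box T m x = q"
  unfolding bump_box_def
proof (rule the_equality)
  fix p assume p: "p \<in> mode_boxes T m \<and> T p = Some (bumped T m x)"
  obtain a b c d where pq: "p = (a,b)" "q = (c,d)" by force
  show "p = q"
  proof (cases m)
    case InRow
    then have "a = c" using p q pq by (simp add: mode_boxes_iff)
    moreover have "\<not> b < d" "\<not> d < b"
      using increasing_rowD[OF inc] p q pq \<open>a = c\<close> by blast+
    ultimately show ?thesis using pq by simp
  next
    case InCol
    then have "b = d" using p q pq by (simp add: mode_boxes_iff)
    moreover have "\<not> a < c" "\<not> c < a"
      using increasing_colD[OF inc] p q pq \<open>b = d\<close> by blast+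
    ultimately show ?thesis using pq by simp
  qed
qed (use q in blast)

lemma bump_box:
  assumes T: "shifted_tableau T" and "\<not> (\<forall>v\<in>mode_vals T m. v \<le> x)"
  shows "bump_box T m x \<in> mode_boxes T m" and "T (bump_box T m x) = Some (bumped T m x)"
proof -
  obtain q where "q \<in> mode_boxes T m" "T q = Some (bumped T m x)"
    using bumped(1)[OF shifted_tableau_finite[OF T] assms(2)] mode_vals_iff by blast
  with bump_box_eq[OF _ this] T show "bump_box T m x \<in> mode_boxes T m"
    "T (bump_box T m x) = Some (bumped T m x)" unfolding shifted_tableau_def by auto
qed

lemma mode_end_notin_dom:
  assumes "finite (dom T)"
  shows "mode_end T m \<notin> dom T"
proof (cases m)
  case (InRow i)
  have "finite (snd ` row_boxes T i)" using assms by (simp add: row_boxes_def)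
  then have "Max (snd ` row_boxes T i) + 1 \<notin> snd ` row_boxes T i" using Max_ge by fastforce
  then show ?thesis using InRow by (force simp: mode_end_def row_end_def row_boxes_def)
next
  case (InCol j)
  have "finite (fst ` col_boxes T j)" using assms by (simp add: col_boxes_def)
  then have "Max (fst ` col_boxes T j) + 1 \<notin> fst ` col_boxes T j" using Max_ge by fastforce
  then show ?thesis using InCol by (force simp: mode_end_def col_end_def col_boxes_def)
qed

lemma mode_end_cong: "mode_boxes T m = mode_boxes T' m \<Longrightarrow> mode_end T m = mode_end T' m"
  by (cases m) (simp_all add: mode_end_def mode_boxes_def row_end_def col_end_def)

text \<open>A bound on the number of bumps still to come: a row bump passes to a later occupied row,
  or to the columns, and a column bump passes to a later occupied column.\<close>
definition bump_bound :: "ins_mode \<Rightarrow> (nat \<times> nat) set \<Rightarrow> nat" where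
  "bump_bound m D = (case m of InRow i \<Rightarrow> card ({i..} \<inter> fst ` D) + card (snd ` D)
     | InCol j \<Rightarrow> card ({j..} \<inter> snd ` D))"

lemma bump_bound_next_mode:
  assumes fin: "finite D" and p: "p \<in> D"
    and pm: "case m of InRow i \<Rightarrow> fst p = i | InCol j \<Rightarrow> snd p = j"
  shows "bump_bound (next_mode m p) D < bump_bound m D"
proof (cases m)
  case (InRow i)
  have "i \<in> {i..} \<inter> fst ` D" using p pm InRow by force
  moreover have "i \<notin> {i+1..} \<inter> fst ` D" by simp
  ultimately have "{i+1..} \<inter> fst ` D \<subset> {i..} \<inter> fst ` D" by fastforce
  then have "card ({i+1..} \<inter> fst ` D) < card ({i..} \<inter> fst ` D)"
    using fin by (intro psubset_card_mono) auto
  moreover have "card ({snd p + 1..} \<inter> snd ` D) \<le> card (snd ` D)"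
    using fin by (intro card_mono) auto
  ultimately show ?thesis using InRow by (simp add: next_mode_def bump_bound_def)
next
  case (InCol j)
  have "j \<in> {j..} \<inter> snd ` D" using p pm InCol by force
  moreover have "j \<notin> {j+1..} \<inter> snd ` D" by simp
  ultimately have "{j+1..} \<inter> snd ` D \<subset> {j..} \<inter> snd ` D" by fastforce
  then have "card ({j+1..} \<inter> snd ` D) < card ({j..} \<inter> snd ` D)"
    using fin by (intro psubset_card_mono) auto
  then show ?thesis using InCol by (simp add: next_mode_def bump_bound_def)
qed

lemma bump_bound_InRow_1:
  assumes "finite D"
  shows "bump_bound (InRow 1) D \<le> 2 * card D"
proof -
  have "card ({1..} \<inter> fst ` D) \<le> card (fst ` D)" using assms by (intro card_mono) auto
  then show ?thesis
    using card_image_le[OF assms, of fst] card_image_le[OF assms, of snd]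
    by (simp add: bump_bound_def)
qed

lemma mode_boxes_restrict_upto:
  "mode_boxes (restrict_upto k T) m = {q \<in> mode_boxes T m. the (T q) \<le> k}"
  by (auto simp: mode_boxes_iff dom_restrict_upto)

lemma mode_vals_restrict_upto:
  "mode_vals (restrict_upto k T) m = {v \<in> mode_vals T m. v \<le> k}"
  by (force simp: mode_vals_iff mode_boxes_restrict_upto restrict_upto_Some)

lemma bumped_restrict_upto:
  assumes fin: "finite (dom T)" and bump: "\<not> (\<forall>v\<in>mode_vals T m. v \<le> x)"
    and k: "bumped T m x \<le> k"
  shows "bumped (restrict_upto k T) m x = bumped T m x"
  unfolding bumped_def[of "restrict_upto k T"] mode_vals_restrict_upto
proof (rule Min_eqI)
  show "finite {v \<in> {v \<in> mode_vals T m. v \<le> k}. x < v}" using finite_mode_vals[OF fin] by simp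
  show "bumped T m x \<in> {v \<in> {v \<in> mode_vals T m. v \<le> k}. x < v}" using bumped[OF fin bump] k by simp
qed (use bumped(3)[OF fin bump] in simp)

lemma bump_box_restrict_upto:
  assumes T: "shifted_tableau T" and bump: "\<not> (\<forall>v\<in>mode_vals T m. v \<le> x)"
    and k: "bumped T m x \<le> k"
  shows "bump_box (restrict_upto k T) m x = bump_box T m x"
proof (rule bump_box_eq)
  show "increasing (restrict_upto k T)"
    using shifted_tableau_restrict_upto[OF T] unfolding shifted_tableau_def by simp
  have fin: "finite (dom T)" using shifted_tableau_finite[OF T] .
  show "bump_box T m x \<in> mode_boxes (restrict_upto k T) m"
    using bump_box[OF T bump] k by (simp add: mode_boxes_restrict_upto)
  show "restrict_upto k T (bump_box T m x) = Some (bumped (restrict_upto k T) m x)"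
    using bump_box(2)[OF T bump] k bumped_restrict_upto[OF fin bump k]
    by (simp add: restrict_upto_Some)
qed

lemma try_put_restrict_upto:
  assumes T: "shifted_tableau T" and xk: "x \<le> k" and e: "\<forall>y. T e = Some y \<longrightarrow> x < y"
  shows "restrict_upto k (try_put T e x) = try_put (restrict_upto k T) e x"
proof -
  have "shifted_tableau (T(e \<mapsto> x)) \<longleftrightarrow> shifted_tableau ((restrict_upto k T)(e \<mapsto> x))"
    using shifted_tableau_upd_of_restrict[OF T xk e] shifted_tableau_restrict_upto[of "T(e \<mapsto> x)" k]
    by (auto simp: restrict_upto_upd_le[OF xk])
  then show ?thesis by (simp add: try_put_def inc_shifted_tableau_iff restrict_upto_upd_le[OF xk])
qed

lemma try_put_restrict_upto_large:
  assumes "k < x" and "\<forall>v. T e = Some v \<longrightarrow> k < v"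
  shows "restrict_upto k (try_put T e x) = restrict_upto k T"
  using assms restrict_upto_None[of T k e]
  by (auto simp: try_put_def restrict_upto_upd_gt fun_upd_idem)

lemma row_boxes_less:
  assumes T: "shifted_tableau T" and y: "T (i,c) = Some y"
  shows "{q \<in> row_boxes T i. the (T q) < y} = {(i,j) | j. i \<le> j \<and> j < c}"
proof -
  have inc: "increasing T" and D: "shifted_closed (dom T)" using T unfolding shifted_tableau_def by auto
  have "the (T (i,j)) < y \<longleftrightarrow> j < c" if "T (i,j) = Some u" for j u
    using increasing_rowD[OF inc that y] increasing_row_leD[OF inc y that] that by force
  moreover have "(i,j) \<in> dom T \<longleftrightarrow> i \<le> j \<and> j \<le> c" if "j < c" for j
    using shifted_closed_left[OF D, of i c j] shifted_tableau_box[OF T, of i j] y that by auto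
  ultimately show ?thesis unfolding row_boxes_def by fastforce
qed

lemma col_boxes_less:
  assumes T: "shifted_tableau T" and y: "T (a,j) = Some y"
  shows "{q \<in> col_boxes T j. the (T q) < y} = {(i,j) | i. 1 \<le> i \<and> i < a}"
proof -
  have inc: "increasing T" and D: "shifted_closed (dom T)" using T unfolding shifted_tableau_def by auto
  have "the (T (i,j)) < y \<longleftrightarrow> i < a" if "T (i,j) = Some u" for i u
    using increasing_colD[OF inc that y] increasing_col_leD[OF inc y that] that by force
  moreover have "(i,j) \<in> dom T \<longleftrightarrow> 1 \<le> i" if "i < a" for i
    using shifted_closed_up[OF D, of a j i] shifted_tableau_box[OF T, of i j] y that by auto
  ultimately show ?thesis unfolding col_boxes_def by fastforce
qed

lemma row_end_eq:
  assumes "row_boxes T i = {(i,j) | j. i \<le> j \<and> j < c}" and "i \<le> c"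
  shows "row_end T i = (i,c)"
proof (cases "c = i")
  case False
  then have "snd ` row_boxes T i = {i..<c}" "row_boxes T i \<noteq> {}"
    using assms by (auto simp: image_iff)
  moreover have "Max {i..<c} = c - 1" using False assms(2) by (intro Max_eqI) auto
  ultimately show ?thesis using assms False by (simp add: row_end_def)
qed (use assms in \<open>simp add: row_end_def\<close>)

lemma col_end_eq:
  assumes "col_boxes T j = {(i,j) | i. 1 \<le> i \<and> i < a}" and "1 \<le> a"
  shows "col_end T j = (a,j)"
proof (cases "a = 1")
  case False
  then have "fst ` col_boxes T j = {1..<a}" "col_boxes T j \<noteq> {}"
    using assms by (auto simp: image_iff)
  moreover have "Max {1..<a} = a - 1" using False assms(2) by (intro Max_eqI) auto
  ultimately show ?thesis using assms False by (simp add: col_end_def)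
qed (use assms in \<open>simp add: col_end_def\<close>)

lemma mode_end_restrict_upto:
  assumes T: "shifted_tableau T" and bump: "\<not> (\<forall>v\<in>mode_vals T m. v \<le> x)"
    and xk: "x \<le> k" and ky: "k < bumped T m x"
  shows "mode_end (restrict_upto k T) m = bump_box T m x"
proof -
  define y p where "y = bumped T m x" and "p = bump_box T m x"
  have fin: "finite (dom T)" using shifted_tableau_finite[OF T] .
  have p: "p \<in> mode_boxes T m" "T p = Some y" using bump_box[OF T bump] unfolding p_def y_def by auto
  \<comment> \<open>no label of the row (column) lies strictly between \<open>x\<close> and \<open>y\<close>\<close>
  have "the (T q) \<le> k \<longleftrightarrow> the (T q) < y" if "q \<in> mode_boxes T m" for q
    using bumped(3)[OF fin bump, of "the (T q)"] that xk ky unfolding y_def mode_vals_def by force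
  then have R: "mode_boxes (restrict_upto k T) m = {q \<in> mode_boxes T m. the (T q) < y}"
    unfolding mode_boxes_restrict_upto by blast
  obtain a c where ac: "p = (a,c)" by force
  have "1 \<le> a" "a \<le> c" using shifted_tableau_box[OF T] p ac by (auto simp: mode_boxes_iff)
  then show ?thesis
  proof (cases m)
    case (InRow i)
    then have "a = i" using p ac by (simp add: mode_boxes_iff)
    then show ?thesis using R row_boxes_less[OF T] row_end_eq p ac InRow \<open>a \<le> c\<close>
      by (simp add: mode_boxes_def mode_end_def p_def)
  next
    case (InCol j)
    then have "c = j" using p ac by (simp add: mode_boxes_iff)
    then show ?thesis using R col_boxes_less[OF T] col_end_eq p ac InCol \<open>1 \<le> a\<close>
      by (simp add: mode_boxes_def mode_end_def p_def)
  qed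
qed

lemma shifted_tableau_hecke_ins: "shifted_tableau T \<Longrightarrow> shifted_tableau (hecke_ins n m x T)"
proof (induction n arbitrary: m x T)
  case (Suc n)
  then show ?case
    by (cases "\<forall>v\<in>mode_vals T m. v \<le> x")
      (simp_all add: hecke_ins_Suc_put hecke_ins_Suc_bump shifted_tableau_try_put)
qed simp

lemma ran_hecke_ins: "shifted_tableau T \<Longrightarrow> ran (hecke_ins n m x T) \<subseteq> insert x (ran T)"
proof (induction n arbitrary: m x T)
  case (Suc n)
  show ?case
  proof (cases "\<forall>v\<in>mode_vals T m. v \<le> x")
    case True
    then show ?thesis using ran_try_put by (simp add: hecke_ins_Suc_put)
  next
    case bump: False
    have "bumped T m x \<in> ran T" using bump_box[OF Suc.prems bump] by (blast intro: ranI)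
    then show ?thesis
      using Suc.IH[OF shifted_tableau_try_put[OF Suc.prems]] ran_try_put
      by (fastforce simp: hecke_ins_Suc_bump[OF bump])
  qed
qed auto

lemma restrict_upto_hecke_ins_large:
  assumes "shifted_tableau T" and "k < x"
  shows "restrict_upto k (hecke_ins n m x T) = restrict_upto k T"
  using assms
proof (induction n arbitrary: m x T)
  case (Suc n)
  show ?case
  proof (cases "\<forall>v\<in>mode_vals T m. v \<le> x")
    case True
    then show ?thesis
      using mode_end_notin_dom[OF shifted_tableau_finite[OF Suc.prems(1)]] Suc.prems(2)
      by (simp add: hecke_ins_Suc_put try_put_restrict_upto_large domIff)
  next
    case bump: False
    have "k < bumped T m x" using bumped(2)[OF shifted_tableau_finite[OF Suc.prems(1)] bump] Suc.prems(2)
      by simp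
    then show ?thesis
      using Suc.IH[OF shifted_tableau_try_put[OF Suc.prems(1)]] bump_box(2)[OF Suc.prems(1) bump]
        try_put_restrict_upto_large[OF Suc.prems(2)]
      by (simp add: hecke_ins_Suc_bump[OF bump])
  qed
qed simp

lemma restrict_upto_hecke_ins_Suc_put:
  assumes T: "shifted_tableau T" and xk: "x \<le> k" and put: "\<forall>v\<in>mode_vals T m. v \<le> x"
  shows "restrict_upto k (hecke_ins (Suc n) m x T) = hecke_ins (Suc n') m x (restrict_upto k T)"
proof -
  have "mode_boxes (restrict_upto k T) m = mode_boxes T m"
    using put xk by (fastforce simp: mode_boxes_restrict_upto mode_vals_def)
  then have "mode_end (restrict_upto k T) m = mode_end T m" by (rule mode_end_cong)
  moreover have "\<forall>v\<in>mode_vals (restrict_upto k T) m. v \<le> x"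
    using put by (simp add: mode_vals_restrict_upto)
  ultimately show ?thesis
    using try_put_restrict_upto[OF T xk] mode_end_notin_dom[OF shifted_tableau_finite[OF T]] put
    by (simp add: hecke_ins_Suc_put domIff)
qed

lemma hecke_ins_Suc_restrict_upto_bump:
  assumes T: "shifted_tableau T" and bump: "\<not> (\<forall>v\<in>mode_vals T m. v \<le> x)"
    and yk: "bumped T m x \<le> k"
  shows "hecke_ins (Suc n) m x (restrict_upto k T) = hecke_ins n (next_mode m (bump_box T m x))
    (bumped T m x) (try_put (restrict_upto k T) (bump_box T m x) x)"
proof -
  have fin: "finite (dom T)" using shifted_tableau_finite[OF T] .
  have "\<not> (\<forall>v\<in>mode_vals (restrict_upto k T) m. v \<le> x)"
    using bumped(1,2)[OF fin bump] yk by (auto simp: mode_vals_restrict_upto)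
  then have "hecke_ins (Suc n) m x (restrict_upto k T)
    = hecke_ins n (next_mode m (bump_box (restrict_upto k T) m x)) (bumped (restrict_upto k T) m x)
        (try_put (restrict_upto k T) (bump_box (restrict_upto k T) m x) x)"
    by (rule hecke_ins_Suc_bump)
  then show ?thesis
    unfolding bumped_restrict_upto[OF fin bump yk] bump_box_restrict_upto[OF T bump yk] .
qed

lemma hecke_ins_Suc_restrict_upto_stop:
  assumes T: "shifted_tableau T" and bump: "\<not> (\<forall>v\<in>mode_vals T m. v \<le> x)"
    and xk: "x \<le> k" and ky: "k < bumped T m x"
  shows "hecke_ins (Suc n) m x (restrict_upto k T) = try_put (restrict_upto k T) (bump_box T m x) x"
proof -
  have "\<forall>v\<in>mode_vals (restrict_upto k T) m. v \<le> x"
    using bumped(3)[OF shifted_tableau_finite[OF T] bump] ky by (force simp: mode_vals_restrict_upto)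
  then show ?thesis by (simp add: hecke_ins_Suc_put mode_end_restrict_upto[OF T bump xk ky])
qed

lemma restrict_upto_hecke_ins:
  assumes "shifted_tableau T" and "x \<le> k"
    and "bump_bound m (dom T) < n" and "bump_bound m (dom (restrict_upto k T)) < n'"
  shows "restrict_upto k (hecke_ins n m x T) = hecke_ins n' m x (restrict_upto k T)"
  using assms
proof (induction n arbitrary: n' m x T)
  case (Suc n)
  note T = Suc.prems(1) and xk = Suc.prems(2)
  obtain n'' where n': "n' = Suc n''" using Suc.prems(4) by (cases n') auto
  have fin: "finite (dom T)" using shifted_tableau_finite[OF T] .
  show ?case
  proof (cases "\<forall>v\<in>mode_vals T m. v \<le> x")
    case True
    then show ?thesis unfolding n' by (rule restrict_upto_hecke_ins_Suc_put[OF T xk])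
  next
    case bump: False
    define y p where "y = bumped T m x" and "p = bump_box T m x"
    have xy: "x < y" and p: "p \<in> mode_boxes T m" "T p = Some y"
      using bumped(2)[OF fin bump] bump_box[OF T bump] unfolding y_def p_def by auto
    have put: "restrict_upto k (try_put T p x) = try_put (restrict_upto k T) p x"
      using try_put_restrict_upto[OF T xk] p xy by simp
    have step: "hecke_ins (Suc n) m x T = hecke_ins n (next_mode m p) y (try_put T p x)"
      unfolding hecke_ins_Suc_bump[OF bump] y_def p_def ..
    show ?thesis
    proof (cases "y \<le> k")
      case True
      have "p \<in> dom T" "p \<in> dom (restrict_upto k T)" "finite (dom (restrict_upto k T))"
        using p True shifted_tableau_finite[OF shifted_tableau_restrict_upto[OF T]]
        by (auto simp: mode_boxes_iff dom_restrict_upto)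
      moreover have "case m of InRow i \<Rightarrow> fst p = i | InCol j \<Rightarrow> snd p = j"
        using p(1) by (simp add: mode_boxes_iff)
      ultimately have "bump_bound (next_mode m p) (dom (try_put T p x)) < n"
        and "bump_bound (next_mode m p) (dom (restrict_upto k (try_put T p x))) < n''"
        using bump_bound_next_mode[OF fin, of p m] bump_bound_next_mode[of "dom (restrict_upto k T)" p m]
          Suc.prems(3,4) by (simp_all add: put dom_try_put n')
      from Suc.IH[OF shifted_tableau_try_put[OF T] True this] show ?thesis
        using hecke_ins_Suc_restrict_upto_bump[OF T bump True[unfolded y_def], folded p_def y_def]
        by (simp add: step put n')
    next
      case False
      then show ?thesis
        using restrict_upto_hecke_ins_large[OF shifted_tableau_try_put[OF T]] put
          hecke_ins_Suc_restrict_upto_stop[OF T bump xk]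
        by (simp add: step n' y_def p_def)
    qed
  qed
qed simp

lemma restrict_upto_hecke_insert:
  assumes T: "shifted_tableau T"
  shows "restrict_upto k (hecke_insert T x)
    = (if x \<le> k then hecke_insert (restrict_upto k T) x else restrict_upto k T)"
proof (cases "x \<le> k")
  case True
  have "bump_bound (InRow 1) (dom T) < 2 * card (dom T) + 3"
    using bump_bound_InRow_1[OF shifted_tableau_finite[OF T]] by linarith
  moreover have "bump_bound (InRow 1) (dom (restrict_upto k T)) < 2 * card (dom (restrict_upto k T)) + 3"
    using bump_bound_InRow_1[OF shifted_tableau_finite[OF shifted_tableau_restrict_upto[OF T, of k]]]
    by linarith
  ultimately show ?thesis
    unfolding hecke_insert_def using restrict_upto_hecke_ins[OF T True] True by simp
qed (simp add: hecke_insert_def restrict_upto_hecke_ins_large[OF T])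

lemma shifted_tableau_hecke_insert: "shifted_tableau T \<Longrightarrow> shifted_tableau (hecke_insert T x)"
  unfolding hecke_insert_def by (rule shifted_tableau_hecke_ins)

lemma restrict_upto_foldl_hecke_insert:
  "shifted_tableau T \<Longrightarrow> restrict_upto k (foldl hecke_insert T w)
     = foldl hecke_insert (restrict_upto k T) (restrict_word w {..k})"
proof (induction w arbitrary: T)
  case (Cons a w)
  from Cons.IH[OF shifted_tableau_hecke_insert[OF Cons.prems, of a]] show ?case
    using restrict_upto_hecke_insert[OF Cons.prems, of a k] by (simp add: restrict_word_def)
qed (simp add: restrict_word_def)

lemma ran_P_tab: "ran (P_tab w) \<subseteq> set w"
proof -
  have "ran (foldl hecke_insert T w) \<subseteq> ran T \<union> set w" if "shifted_tableau T" for T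
    using that
  proof (induction w arbitrary: T)
    case (Cons a w)
    from Cons.IH[OF shifted_tableau_hecke_insert[OF Cons.prems, of a]] show ?case
      using ran_hecke_ins[OF Cons.prems] by (fastforce simp: hecke_insert_def)
  qed simp
  then show ?thesis unfolding P_tab_def using shifted_tableau_empty by fastforce
qed

theorem lemma2:
  fixes w :: "nat list" and k :: nat
  assumes "\<forall>a\<in>set w. 0 < a"
    and "1 \<le> k"
  shows "restrict_tab (P_tab w) {1..k} = P_tab (restrict_word w {1..k})"
proof -
  have "0 < v" if "P_tab w q = Some v" for q v
    using ranI[of "P_tab w", OF that] ran_P_tab assms(1) by blast
  then have "restrict_tab (P_tab w) {1..k} = restrict_upto k (P_tab w)"
    by (fastforce simp: restrict_tab_def fun_eq_iff Suc_le_eq split: option.split)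
  also have "\<dots> = P_tab (restrict_word w {..k})"
    unfolding P_tab_def restrict_upto_foldl_hecke_insert[OF shifted_tableau_empty]
    by (simp add: restrict_tab_def)
  also have "restrict_word w {..k} = restrict_word w {1..k}"
    unfolding restrict_word_def using assms(1) by (intro filter_cong) auto
  finally show ?thesis .
qed

end
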